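(* Let $\mathcal{LS}_{\mathfrak{A}_1}$ be the operad (variety) of left-symmetric algebras over a field of characteristic $0$ satisfying the identity $(ab)c+(ba)c+(ac)b+(ca)b+(bc)a+(cb)a=0$. Its Koszul dual operad $\mathcal{LS}_{\mathfrak{A}_1}^{(!)}$ is the operad of alternative algebras satisfying the left-commutative identity $a(bc)=b(ac)$.
   Context: A left-symmetric algebra is an algebra whose associator $(a,b,c)=(ab)c-a(bc)$ satisfies $(a,b,c)=(b,a,c)$. An algebra is alternative if $(a,a,b)=0=(a,b,b)$. The Koszul dual of a binary quadratic operad is taken in the sense of Ginzburg–Kapranov; equivalently, $\mathcal{P}^{(!)}$ is the quadratic operad whose algebras $U$ are defined by exactly those degree-3 identities making $S\otimes U$, with product $(a\otimes u)(b\otimes v)=ab\otimes uv$, Lie-admissible (its commutator satisfies the Jacobi identity) for every $\mathcal{P}$-algebra $S$. *)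

theory Defs
  imports Main "HOL.Vector_Spaces"
begin

text \<open>Multilinear degree-3 monomials of the free nonassociative algebra on one
binary operation, in the variables x_0, x_1, x_2:
  Lm [i,j,k] = (x_i x_j) x_k  and  Rm [i,j,k] = x_i (x_j x_k),
with [i,j,k] a permutation of [0,1,2].  The component of arity 3 of the free
binary operad is the 12-dimensional space with this basis.\<close>

datatype mono3 = Lm "nat list" | Rm "nat list"

definition perms3 :: "nat list list" where
  "perms3 = [[0,1,2],[0,2,1],[1,0,2],[1,2,0],[2,0,1],[2,1,0]]"

definition monos3 :: "mono3 set" where
  "monos3 = Lm ` set perms3 \<union> Rm ` set perms3"

definition sgn3 :: "nat list \<Rightarrow> 'k::comm_ring_1" where
  "sgn3 p = (-1) ^ card {(i,j). i < j \<and> j < 3 \<and> p ! j < p ! i}"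

definition elems3 :: "(mono3 \<Rightarrow> 'k::field) set" where
  "elems3 = {f. \<forall>m. m \<notin> monos3 \<longrightarrow> f m = 0}"

definition delta3 :: "mono3 \<Rightarrow> mono3 \<Rightarrow> 'k::field" where
  "delta3 m m' = (if m' = m then 1 else 0)"

definition lin_span :: "(mono3 \<Rightarrow> 'k::field) list \<Rightarrow> (mono3 \<Rightarrow> 'k) set" where
  "lin_span gs = {f. \<exists>c. f = (\<lambda>m. \<Sum>i<length gs. c i * (gs ! i) m)}"

text \<open>Ginzburg--Kapranov pairing on the arity-3 component:
  <(x_i x_j) x_k, (x_i x_j) x_k> = sgn(ijk),  <x_i (x_j x_k), x_i (x_j x_k)> = - sgn(ijk),
all other pairings of basis monomials being 0.\<close>
definition eps3 :: "mono3 \<Rightarrow> 'k::field" where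
  "eps3 m = (case m of Lm p \<Rightarrow> sgn3 p | Rm p \<Rightarrow> - sgn3 p)"

definition pairing3 :: "(mono3 \<Rightarrow> 'k::field) \<Rightarrow> (mono3 \<Rightarrow> 'k) \<Rightarrow> 'k" where
  "pairing3 f g = (\<Sum>m\<in>monos3. eps3 m * f m * g m)"

text \<open>Relations of the Koszul dual: the orthogonal complement of the relations.\<close>
definition dual_rel :: "(mono3 \<Rightarrow> 'k::field) set \<Rightarrow> (mono3 \<Rightarrow> 'k) set" where
  "dual_rel R = {g \<in> elems3. \<forall>f\<in>R. pairing3 f g = 0}"

text \<open>Relations of LS_A1: left-symmetry (a,b,c) - (b,a,c) in all S3-relabellings,
and the identity (ab)c+(ba)c+(ac)b+(ca)b+(bc)a+(cb)a.\<close>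
definition ls_gen :: "nat list \<Rightarrow> mono3 \<Rightarrow> 'k::field" where
  "ls_gen p = (\<lambda>m. delta3 (Lm p) m - delta3 (Rm p) m
                  - delta3 (Lm [p!1, p!0, p!2]) m + delta3 (Rm [p!1, p!0, p!2]) m)"

definition a1_gen :: "mono3 \<Rightarrow> 'k::field" where
  "a1_gen = (\<lambda>m. \<Sum>p\<leftarrow>perms3. delta3 (Lm p) m)"

definition LS_A1_rel :: "(mono3 \<Rightarrow> 'k::field) set" where
  "LS_A1_rel = lin_span (a1_gen # map ls_gen perms3)"

definition bilinear_prod :: "('k::field \<Rightarrow> 'u::ab_group_add \<Rightarrow> 'u) \<Rightarrow> ('u \<Rightarrow> 'u \<Rightarrow> 'u) \<Rightarrow> bool" where
  "bilinear_prod smul mul \<longleftrightarrow>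
     (\<forall>x y z. mul (x + y) z = mul x z + mul y z) \<and>
     (\<forall>x y z. mul z (x + y) = mul z x + mul z y) \<and>
     (\<forall>c x y. mul (smul c x) y = smul c (mul x y)) \<and>
     (\<forall>c x y. mul x (smul c y) = smul c (mul x y))"

fun eval_mono :: "('u \<Rightarrow> 'u \<Rightarrow> 'u) \<Rightarrow> (nat \<Rightarrow> 'u) \<Rightarrow> mono3 \<Rightarrow> 'u" where
  "eval_mono mul a (Lm p) = mul (mul (a (p!0)) (a (p!1))) (a (p!2))"
| "eval_mono mul a (Rm p) = mul (a (p!0)) (mul (a (p!1)) (a (p!2)))"

definition satisfies3 :: "('k::field \<Rightarrow> 'u::ab_group_add \<Rightarrow> 'u) \<Rightarrow> ('u \<Rightarrow> 'u \<Rightarrow> 'u) \<Rightarrow> (mono3 \<Rightarrow> 'k) \<Rightarrow> bool" where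
  "satisfies3 smul mul g \<longleftrightarrow> (\<forall>a. (\<Sum>m\<in>monos3. smul (g m) (eval_mono mul a m)) = 0)"

definition associator :: "('u::ab_group_add \<Rightarrow> 'u \<Rightarrow> 'u) \<Rightarrow> 'u \<Rightarrow> 'u \<Rightarrow> 'u \<Rightarrow> 'u" where
  "associator mul a b c = mul (mul a b) c - mul a (mul b c)"

definition alternative :: "('u::ab_group_add \<Rightarrow> 'u \<Rightarrow> 'u) \<Rightarrow> bool" where
  "alternative mul \<longleftrightarrow> (\<forall>a b. associator mul a a b = 0 \<and> associator mul a b b = 0)"

definition left_commutative :: "('u \<Rightarrow> 'u \<Rightarrow> 'u) \<Rightarrow> bool" where
  "left_commutative mul \<longleftrightarrow> (\<forall>a b c. mul a (mul b c) = mul b (mul a c))"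

end

theory Submission
  imports Defs
begin

text \<open>In an alternative algebra the associator is alternating, so each left-normed monomial
(x_i x_j) x_k is the right-normed x_i (x_j x_k) plus sgn(ijk) (x_0, x_1, x_2); left
commutativity further identifies x_i (x_j x_k) with x_j (x_i x_k).  Evaluating an arbitrary
multilinear element g therefore yields a combination of three right-normed monomials and
the associator whose coefficients are precisely the pairings of g with the generators of
the LS_A1 relations, and these vanish for g in the dual.  Conversely, the linearised
alternative laws and left commutativity are orthogonal to the LS_A1 relations, and in
characteristic 0 the linearised laws give back the alternative laws.\<close>

lemma sum_monos3:
  "sum h monos3 =
     h (Lm [0,1,2]) + h (Lm [0,2,1]) + h (Lm [1,0,2]) + h (Lm [1,2,0]) + h (Lm [2,0,1]) + h (Lm [2,1,0])
   + h (Rm [0,1,2]) + h (Rm [0,2,1]) + h (Rm [1,0,2]) + h (Rm [1,2,0]) + h (Rm [2,0,1]) + h (Rm [2,1,0])"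
  by (simp add: monos3_def perms3_def add_ac)

lemma sgn3_perms3:
  "sgn3 [0,1,2] = 1" "sgn3 [0,2,1] = -1" "sgn3 [1,0,2] = -1"
  "sgn3 [1,2,0] = 1" "sgn3 [2,0,1] = 1" "sgn3 [2,1,0] = -1"
proof -
  have inversions: "{(i,j). i < j \<and> j < (3::nat) \<and> P i j} =
      set (filter (\<lambda>(i,j). P i j) [(0,1),(0,2),(1,2)])" for P
    by (auto simp: less_Suc_eq numeral_3_eq_3 numeral_2_eq_2)
  show "sgn3 [0,1,2] = 1" "sgn3 [0,2,1] = -1" "sgn3 [1,0,2] = -1"
    "sgn3 [1,2,0] = 1" "sgn3 [2,0,1] = 1" "sgn3 [2,1,0] = -1"
    by (simp_all add: sgn3_def inversions)
qed

lemma nth_perm3 [simp]: "[a,b,c] ! 0 = a" "[a,b,c] ! 1 = b" "[a,b,c] ! 2 = c"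
  by (simp_all add: numeral_2_eq_2)

lemma perms3_cases [consumes 1]:
  assumes "p \<in> set perms3"
  obtains "p = [0,1,2]" | "p = [0,2,1]" | "p = [1,0,2]" | "p = [1,2,0]" | "p = [2,0,1]" | "p = [2,1,0]"
  using assms unfolding perms3_def by auto

lemma pairing3_lin_comb:
  "pairing3 (\<lambda>m. \<Sum>i<n. c i * (gs ! i) m) g = (\<Sum>i<n. c i * pairing3 (gs ! i) g)"
  unfolding pairing3_def
  by (simp add: sum_distrib_left sum_distrib_right mult_ac sum.swap[of _ monos3])

lemma lin_span_nth: "i < length gs \<Longrightarrow> gs ! i \<in> lin_span gs"
  unfolding lin_span_def
  by (auto intro!: exI[of _ "\<lambda>j. if j = i then 1 else 0"]
           simp: if_distrib[of "\<lambda>c. c * _"] cong: if_cong)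

lemma dual_rel_lin_span:
  "dual_rel (lin_span gs) = {g \<in> elems3. \<forall>f\<in>set gs. pairing3 f g = 0}"
  by (auto simp: dual_rel_def in_set_conv_nth lin_span_nth)
     (auto simp: lin_span_def pairing3_lin_comb)

lemma mem_dual_rel_LS_A1:
  "g \<in> dual_rel LS_A1_rel \<longleftrightarrow>
     g \<in> elems3 \<and> pairing3 a1_gen g = 0 \<and> (\<forall>p\<in>set perms3. pairing3 (ls_gen p) g = 0)"
  by (simp add: LS_A1_rel_def dual_rel_lin_span)

lemma double_eq_0_imp_eq_0:
  fixes scale :: "'k::field_char_0 \<Rightarrow> 'u::ab_group_add \<Rightarrow> 'u" and w :: 'u
  assumes "vector_space scale" and "w + w = 0"
  shows "w = 0"
proof -
  interpret vector_space scale by fact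
  have "scale 2 w = scale (1 + 1) w" by simp
  also have "\<dots> = w + w" by (simp only: scale_left_distrib scale_one)
  finally show ?thesis using assms(2) by simp
qed

lemma alternative_associator_antisym:
  assumes "bilinear_prod smul mul" and "alternative mul"
  shows "associator mul x y z = - associator mul y x z"
    and "associator mul x y z = - associator mul x z y"
proof -
  from assms(1) have distl: "mul (x + y) z = mul x z + mul y z"
    and distr: "mul z (x + y) = mul z x + mul z y" for x y z
    by (auto simp: bilinear_prod_def)
  have "associator mul (x + y) (x + y) z = 0" "associator mul x (y + z) (y + z) = 0"
    using assms(2) by (simp_all add: alternative_def)
  then have "associator mul x y z + associator mul y x z = 0"
    and "associator mul x y z + associator mul x z y = 0"
    using assms(2) unfolding alternative_def associator_def
    by (simp_all add: distl distr algebra_simps)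
  then show "associator mul x y z = - associator mul y x z"
    and "associator mul x y z = - associator mul x z y"
    by (simp_all add: eq_neg_iff_add_eq_0 add.commute)
qed

lemma alternative_associator_perms3:
  assumes "vector_space smul" and "bilinear_prod smul mul" and "alternative mul"
    and "p \<in> set perms3"
  shows "associator mul (a (p!0)) (a (p!1)) (a (p!2)) =
           smul (sgn3 p) (associator mul (a 0) (a 1) (a 2))"
proof -
  interpret vector_space smul by fact
  note antisym = alternative_associator_antisym[OF assms(2,3)]
  from assms(4) show ?thesis
    by (cases rule: perms3_cases)
      (simp_all only: nth_perm3 sgn3_perms3 scale_one scale_minus_left minus_minus
        antisym(1)[of "a 1" "a 0" "a 2"] antisym(2)[of "a 0" "a 2" "a 1"]
        antisym(2)[of "a 1" "a 2" "a 0"] antisym(1)[of "a 2" "a 0" "a 1"]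
        antisym(1)[of "a 2" "a 1" "a 0"])
qed

lemma sum_monos3_perms3:
  "sum h monos3 = (\<Sum>p\<in>set perms3. h (Lm p) + h (Rm p))"
  by (simp add: sum_monos3 perms3_def add_ac)

lemma alternative_left_commutative_eval_sum:
  assumes "vector_space smul" and "bilinear_prod smul mul"
    and "alternative mul" and "left_commutative mul"
  shows "(\<Sum>m\<in>monos3. smul (g m) (eval_mono mul a m)) =
           smul (pairing3 (ls_gen [0,1,2]) g) (eval_mono mul a (Rm [0,1,2]))
         - smul (pairing3 (ls_gen [0,2,1]) g) (eval_mono mul a (Rm [0,2,1]))
         + smul (pairing3 (ls_gen [1,2,0]) g) (eval_mono mul a (Rm [1,2,0]))
         + smul (pairing3 a1_gen g) (associator mul (a 0) (a 1) (a 2))"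
proof -
  interpret vector_space smul by fact
  define R where "R p = eval_mono mul a (Rm p)" for p
  define A where "A = associator mul (a 0) (a 1) (a 2)"
  have left: "eval_mono mul a (Lm p) = R p + smul (sgn3 p) A" if "p \<in> set perms3" for p
    using alternative_associator_perms3[OF assms(1-3) that, of a]
    by (simp add: R_def A_def associator_def diff_eq_eq add.commute)
  have right: "R [1,0,2] = R [0,1,2]" "R [2,0,1] = R [0,2,1]" "R [2,1,0] = R [1,2,0]"
    using assms(4) by (simp_all add: R_def left_commutative_def)
  have "(\<Sum>m\<in>monos3. smul (g m) (eval_mono mul a m)) =
      (\<Sum>p\<in>set perms3. smul (g (Lm p) + g (Rm p)) (R p) + smul (g (Lm p) * sgn3 p) A)"
    unfolding sum_monos3_perms3
    by (intro sum.cong refl)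
      (simp add: left R_def[symmetric] scale_left_distrib scale_right_distrib del: eval_mono.simps)
  \<comment> \<open>One_nat_def would turn the 1 in [0,1,2] into Suc 0 before sgn3_perms3 can match.\<close>
  also have "\<dots> = smul (pairing3 (ls_gen [0,1,2]) g) (R [0,1,2])
         - smul (pairing3 (ls_gen [0,2,1]) g) (R [0,2,1])
         + smul (pairing3 (ls_gen [1,2,0]) g) (R [1,2,0])
         + smul (pairing3 a1_gen g) A"
    by (simp add: perms3_def right pairing3_def sum_monos3 eps3_def sgn3_perms3 ls_gen_def
        a1_gen_def delta3_def scale_left_distrib scale_left_diff_distrib algebra_simps
        del: One_nat_def)
  finally show ?thesis by (simp only: R_def A_def)
qed

lemma alternative_left_commutative_satisfies_dual:
  assumes "vector_space smul" and "bilinear_prod smul mul"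
    and "alternative mul" and "left_commutative mul"
    and "g \<in> dual_rel LS_A1_rel"
  shows "satisfies3 smul mul g"
proof -
  interpret vector_space smul by fact
  from assms(5) have "pairing3 a1_gen g = 0" and "pairing3 (ls_gen [0,1,2]) g = 0"
    and "pairing3 (ls_gen [0,2,1]) g = 0" and "pairing3 (ls_gen [1,2,0]) g = 0"
    by (simp_all add: mem_dual_rel_LS_A1 perms3_def)
  then show ?thesis
    by (simp add: satisfies3_def alternative_left_commutative_eval_sum[OF assms(1-4)])
qed

lemma satisfies_dual_alternative_left_commutative:
  fixes smul :: "'k::field_char_0 \<Rightarrow> 'u::ab_group_add \<Rightarrow> 'u"
  assumes "vector_space smul"
    and "\<forall>g\<in>dual_rel (LS_A1_rel :: (mono3 \<Rightarrow> 'k) set). satisfies3 smul mul g"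
  shows "alternative mul \<and> left_commutative mul"
proof -
  interpret vector_space smul by fact
  define assoc_vec :: "nat list \<Rightarrow> mono3 \<Rightarrow> 'k" where
    "assoc_vec p m = delta3 (Lm p) m - delta3 (Rm p) m" for p m
  define left_alt :: "mono3 \<Rightarrow> 'k" where
    "left_alt m = assoc_vec [0,1,2] m + assoc_vec [1,0,2] m" for m
  define right_alt :: "mono3 \<Rightarrow> 'k" where
    "right_alt m = assoc_vec [0,1,2] m + assoc_vec [0,2,1] m" for m
  define left_comm :: "mono3 \<Rightarrow> 'k" where
    "left_comm m = delta3 (Rm [0,1,2]) m - delta3 (Rm [1,0,2]) m" for m
  have "left_alt \<in> dual_rel LS_A1_rel" "right_alt \<in> dual_rel LS_A1_rel"
    "left_comm \<in> dual_rel LS_A1_rel"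
    by (auto simp: left_alt_def right_alt_def left_comm_def assoc_vec_def mem_dual_rel_LS_A1
        elems3_def monos3_def perms3_def pairing3_def sum_monos3 eps3_def sgn3_perms3 ls_gen_def
        a1_gen_def delta3_def simp del: One_nat_def)
  with assms(2) have sat: "satisfies3 smul mul left_alt" "satisfies3 smul mul right_alt"
    "satisfies3 smul mul left_comm"
    by blast+
  have identity: "(\<Sum>m\<in>monos3. smul (h m) (eval_mono mul (\<lambda>n. [x,y,z] ! n) m)) = 0"
    if "satisfies3 smul mul h" for h x y z
    using that by (simp add: satisfies3_def)
  note expand = sum_monos3 assoc_vec_def delta3_def associator_def algebra_simps
  have "associator mul x y z + associator mul y x z = 0" for x y z
    using identity[OF sat(1), of x y z] by (simp add: left_alt_def expand)
  moreover have "associator mul x y z + associator mul x z y = 0" for x y z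
    using identity[OF sat(2), of x y z] by (simp add: right_alt_def expand)
  moreover have "mul x (mul y z) = mul y (mul x z)" for x y z
    using identity[OF sat(3), of x y z] by (simp add: left_comm_def expand)
  ultimately show ?thesis
    unfolding alternative_def left_commutative_def
    using double_eq_0_imp_eq_0[OF assms(1)] by blast
qed

theorem mainTheorem3:
  fixes smul :: "'k::field_char_0 \<Rightarrow> 'u::ab_group_add \<Rightarrow> 'u"
    and mul :: "'u \<Rightarrow> 'u \<Rightarrow> 'u"
  assumes "vector_space smul"
    and "bilinear_prod smul mul"
  shows "(\<forall>g\<in>dual_rel (LS_A1_rel :: (mono3 \<Rightarrow> 'k) set). satisfies3 smul mul g)
         \<longleftrightarrow> alternative mul \<and> left_commutative mul"
  using satisfies_dual_alternative_left_commutative[OF assms(1)]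
    alternative_left_commutative_satisfies_dual[OF assms]
  by blast

end
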